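(* Let $\mathcal{G}$ be an anonymous polymatrix $N$-player game with common action set $\mathbb{A}$, and let $\bar r^i$ be the functions with $r^i(a^i,a^{-i})=\bar r^i(a^i,\sigma(a^{-i}))$. Let $(\alpha_k)_{k\ge1}$ be any step-size sequence in $(0,1]$ and let $(a_l)_{l\ge0}$ be any sequence of joint actions in $\mathbb{A}^{\otimes N}$. Define, for all $i,j\in[N]$, $\hat\pi^j_0=\mathds{1}\{a^j_0\}$, $\hat\pi^j_k=\hat\pi^j_{k-1}+\alpha_k(\mathds{1}\{a^j_k\}-\hat\pi^j_{k-1})$, and $\hat\mu^i_0=\mathds{1}\{\sigma(a^{-i}_0)\}$, $\hat\mu^i_k=\hat\mu^i_{k-1}+\alpha_k(\mathds{1}\{\sigma(a^{-i}_k)\}-\hat\mu^i_{k-1})$ for $k\ge1$. Then for every $k\ge0$, every agent $i$ and every $a^i\in\mathbb{A}$, $$\bar R^i(a^i,\hat\mu^i_k)=R^i(a^i,\hat\pi^{-i}_k).$$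
   Context: A game is polymatrix if for each $i$ there are functions $r^{ij}:\mathbb{A}^i\times\mathbb{A}^j\to\mathbb{R}$, $j\neq i$, with $r^i(a^i,a^{-i})=\sum_{j\neq i}r^{ij}(a^i,a^j)$ for all $a$. Anonymous: common action set $\mathbb{A}$ ($|\mathbb{A}|=n$), each $r^i(a^i,a^{-i})$ invariant under permutations of $a^{-i}$. $\mathds{1}\{y\}$ denotes the basis vector indexed by $y$ (in $\mathbb{R}^n$ for $y\in\mathbb{A}$, in $\mathbb{R}^{|\mathbb{X}|}$ for $y\in\mathbb{X}$). $\sigma(a^{-i}):=\sum_{j\neq i}\mathds{1}\{a^j\}\in\mathbb{X}:=\{\xi\in\mathbb{N}^n:\sum_l\xi_l=N-1\}$. $R^i(a^i,\pi^{-i}):=\sum_{a^{-i}}r^i(a^i,a^{-i})\prod_{j\ne i}\pi^j(a^j)$ and $\bar R^i(a^i,\mu):=\sum_{x\in\mathbb{X}}\bar r^i(a^i,x)\mu(x)$. *)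

theory Defs
  imports Complex_Main "HOL-Combinatorics.Permutations"
begin

(* Players are 0..N-1; a joint action is a function nat => 'a (only values below N matter);
   'a is the common finite action set. *)

definition basis :: "'b \<Rightarrow> 'b \<Rightarrow> real" where
  "basis y = (\<lambda>z. if z = y then 1 else 0)"

definition sigma :: "nat \<Rightarrow> nat \<Rightarrow> (nat \<Rightarrow> 'a) \<Rightarrow> ('a \<Rightarrow> nat)" where
  "sigma N i a = (\<lambda>l. card {j. j < N \<and> j \<noteq> i \<and> a j = l})"

definition Xset :: "nat \<Rightarrow> ('a::finite \<Rightarrow> nat) set" where
  "Xset N = {\<xi>. (\<Sum>l\<in>UNIV. \<xi> l) = N - 1}"

definition polymatrix :: "nat \<Rightarrow> (nat \<Rightarrow> (nat \<Rightarrow> 'a) \<Rightarrow> real) \<Rightarrow> bool" where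
  "polymatrix N r \<longleftrightarrow> (\<exists>rij :: nat \<Rightarrow> nat \<Rightarrow> 'a \<Rightarrow> 'a \<Rightarrow> real.
      \<forall>i<N. \<forall>a. r i a = (\<Sum>j\<in>{..<N} - {i}. rij i j (a i) (a j)))"

definition anonymous :: "nat \<Rightarrow> (nat \<Rightarrow> (nat \<Rightarrow> 'a) \<Rightarrow> real) \<Rightarrow> bool" where
  "anonymous N r \<longleftrightarrow> (\<forall>i<N. \<forall>p a. p permutes ({..<N} - {i}) \<longrightarrow> r i (a \<circ> p) = r i a)"

definition Rmix :: "nat \<Rightarrow> (nat \<Rightarrow> (nat \<Rightarrow> 'a) \<Rightarrow> real) \<Rightarrow> nat \<Rightarrow> 'a
                    \<Rightarrow> (nat \<Rightarrow> 'a \<Rightarrow> real) \<Rightarrow> real" where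
  "Rmix N r i ai \<pi> = (\<Sum>b\<in>PiE ({..<N} - {i}) (\<lambda>_. UNIV).
       r i (b(i := ai)) * (\<Prod>j\<in>{..<N} - {i}. \<pi> j (b j)))"

definition Rbar :: "nat \<Rightarrow> (nat \<Rightarrow> 'a::finite \<Rightarrow> ('a \<Rightarrow> nat) \<Rightarrow> real) \<Rightarrow> nat \<Rightarrow> 'a
                    \<Rightarrow> (('a \<Rightarrow> nat) \<Rightarrow> real) \<Rightarrow> real" where
  "Rbar N rbar i ai \<mu> = (\<Sum>x\<in>Xset N. rbar i ai x * \<mu> x)"

(* act k j = a^j_k *)
primrec pihat :: "(nat \<Rightarrow> real) \<Rightarrow> (nat \<Rightarrow> nat \<Rightarrow> 'a) \<Rightarrow> nat \<Rightarrow> nat \<Rightarrow> 'a \<Rightarrow> real" where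
  "pihat \<alpha> act j 0 = basis (act 0 j)"
| "pihat \<alpha> act j (Suc k) = (\<lambda>y. pihat \<alpha> act j k y
      + \<alpha> (Suc k) * (basis (act (Suc k) j) y - pihat \<alpha> act j k y))"

primrec muhat :: "nat \<Rightarrow> (nat \<Rightarrow> real) \<Rightarrow> (nat \<Rightarrow> nat \<Rightarrow> 'a) \<Rightarrow> nat \<Rightarrow> nat
                  \<Rightarrow> ('a \<Rightarrow> nat) \<Rightarrow> real" where
  "muhat N \<alpha> act i 0 = basis (sigma N i (act 0))"
| "muhat N \<alpha> act i (Suc k) = (\<lambda>x. muhat N \<alpha> act i k x
      + \<alpha> (Suc k) * (basis (sigma N i (act (Suc k))) x - muhat N \<alpha> act i k x))"

end

theory Submission
  imports Defs
begin

text \<open>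
  Both empirical estimates follow the same convex-combination recursion, and both sides of the
  identity are affine along it: \<open>Rbar\<close> is linear in \<open>\<mu>\<close>, and because the game is polymatrix,
  \<open>Rmix\<close> is a sum of terms each depending on the mixed strategy of a single opponent, hence
  affine in the joint family of marginals (rather than merely multilinear). At a pure profile
  both sides equal \<open>r\<^sup>i\<close>, so the identity propagates by induction on \<open>k\<close>.
\<close>

lemma sigma_fun_upd_self: "i < N \<Longrightarrow> sigma N i (a(i := x)) = sigma N i a"
  unfolding sigma_def by (intro ext arg_cong[where f = card]) auto

lemma sigma_in_Xset:
  fixes a :: "nat \<Rightarrow> 'a::finite"
  assumes "i < N"
  shows "sigma N i a \<in> Xset N"
proof -
  let ?S = "{..<N} - {i}"
  have "sigma N i a l = (\<Sum>j\<in>?S. if a j = l then 1 else 0)" for l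
  proof -
    have "{j. j < N \<and> j \<noteq> i \<and> a j = l} = {j\<in>?S. a j = l}" by auto
    then show ?thesis unfolding sigma_def by (simp add: sum.inter_filter[symmetric])
  qed
  then have "(\<Sum>l\<in>UNIV. sigma N i a l) = (\<Sum>l\<in>(UNIV::'a set). \<Sum>j\<in>?S. if a j = l then 1 else 0)"
    by simp
  also have "\<dots> = (\<Sum>j\<in>?S. \<Sum>l\<in>(UNIV::'a set). if a j = l then 1 else 0)"
    by (rule sum.swap)
  also have "\<dots> = N - 1" using assms by simp
  finally show ?thesis unfolding Xset_def by simp
qed

lemma finite_Xset: "finite (Xset N :: ('a::finite \<Rightarrow> nat) set)"
proof (rule finite_subset)
  show "Xset N \<subseteq> PiE (UNIV :: 'a set) (\<lambda>_. {..N - 1})"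
  proof
    fix \<xi> :: "'a \<Rightarrow> nat"
    assume "\<xi> \<in> Xset N"
    then have "\<xi> l \<le> N - 1" for l
      using member_le_sum[of l UNIV \<xi>] unfolding Xset_def by simp
    then show "\<xi> \<in> PiE UNIV (\<lambda>_. {..N - 1})" by auto
  qed
qed (simp add: finite_PiE)

lemma Rbar_basis: "x \<in> Xset N \<Longrightarrow> Rbar N rbar i ai (basis x) = rbar i ai x"
  unfolding Rbar_def basis_def by (simp add: finite_Xset if_distrib[of "\<lambda>z. _ * z"] cong: if_cong)

lemma Rbar_affine:
  "Rbar N rbar i ai (\<lambda>x. \<mu> x + t * (\<nu> x - \<mu> x)) =
   Rbar N rbar i ai \<mu> + t * (Rbar N rbar i ai \<nu> - Rbar N rbar i ai \<mu>)"
  unfolding Rbar_def by (simp add: algebra_simps sum.distrib sum_distrib_left sum_subtractf)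

lemma sum_pihat: "(\<Sum>y\<in>UNIV. pihat \<alpha> act j k (y::'a::finite)) = 1"
  by (induction k) (simp_all add: basis_def sum.distrib sum_subtractf sum_distrib_left[symmetric])

lemma sum_PiE_single_coordinate:
  fixes \<pi> :: "'i \<Rightarrow> 'b::finite \<Rightarrow> 'c::comm_semiring_1"
  assumes "finite S" and "j \<in> S" and "\<And>m. m \<in> S \<Longrightarrow> (\<Sum>y\<in>UNIV. \<pi> m y) = 1"
  shows "(\<Sum>b\<in>PiE S (\<lambda>_. UNIV). g (b j) * (\<Prod>m\<in>S. \<pi> m (b m))) = (\<Sum>y\<in>UNIV. g y * \<pi> j y)"
proof -
  define h where "h m y = (if m = j then g y * \<pi> j y else \<pi> m y)" for m y
  have "g (b j) * (\<Prod>m\<in>S. \<pi> m (b m)) = (\<Prod>m\<in>S. h m (b m))" for b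
  proof -
    have "(\<Prod>m\<in>S - {j}. h m (b m)) = (\<Prod>m\<in>S - {j}. \<pi> m (b m))"
      unfolding h_def by (intro prod.cong) auto
    then show ?thesis
      using assms(1,2) by (simp add: prod.remove h_def mult.assoc)
  qed
  then have "(\<Sum>b\<in>PiE S (\<lambda>_. UNIV). g (b j) * (\<Prod>m\<in>S. \<pi> m (b m))) = (\<Prod>m\<in>S. \<Sum>y\<in>UNIV. h m y)"
    using prod_sum_PiE[OF assms(1), of "\<lambda>_. UNIV" h] by simp
  also have "\<dots> = (\<Sum>y\<in>UNIV. h j y) * (\<Prod>m\<in>S - {j}. \<Sum>y\<in>UNIV. h m y)"
    using assms(1,2) by (simp add: prod.remove)
  also have "(\<Prod>m\<in>S - {j}. \<Sum>y\<in>UNIV. h m y) = 1"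
    using assms(3) unfolding h_def by (intro prod.neutral) auto
  finally show ?thesis by (simp add: h_def)
qed

definition pairwise_payoff :: "nat set \<Rightarrow> (nat \<Rightarrow> 'a \<Rightarrow> 'a \<Rightarrow> real) \<Rightarrow> 'a \<Rightarrow> (nat \<Rightarrow> 'a \<Rightarrow> real) \<Rightarrow> real"
  where "pairwise_payoff S rij ai \<pi> = (\<Sum>j\<in>S. \<Sum>y\<in>UNIV. rij j ai y * \<pi> j y)"

lemma pairwise_payoff_affine:
  "pairwise_payoff S rij ai (\<lambda>j y. p j y + t * (q j y - p j y)) =
   pairwise_payoff S rij ai p + t * (pairwise_payoff S rij ai q - pairwise_payoff S rij ai p)"
  unfolding pairwise_payoff_def by (simp add: algebra_simps sum.distrib sum_distrib_left sum_subtractf)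

lemma pairwise_payoff_basis:
  "pairwise_payoff S rij ai (\<lambda>j. basis (a j)) = (\<Sum>j\<in>S. rij j ai (a j :: 'a::finite))"
  unfolding pairwise_payoff_def basis_def by (simp add: if_distrib[of "\<lambda>z. _ * z"] cong: if_cong)

lemma Rmix_polymatrix:
  fixes r :: "nat \<Rightarrow> (nat \<Rightarrow> 'a::finite) \<Rightarrow> real"
  assumes "\<And>a. r i a = (\<Sum>j\<in>{..<N} - {i}. rij j (a i) (a j))"
    and "\<And>j. j \<in> {..<N} - {i} \<Longrightarrow> (\<Sum>y\<in>UNIV. \<pi> j y) = 1"
  shows "Rmix N r i ai \<pi> = pairwise_payoff ({..<N} - {i}) rij ai \<pi>"
proof -
  let ?S = "{..<N} - {i}"
  have "Rmix N r i ai \<pi> =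
        (\<Sum>b\<in>PiE ?S (\<lambda>_. UNIV). \<Sum>j\<in>?S. rij j ai (b j) * (\<Prod>m\<in>?S. \<pi> m (b m)))"
    unfolding Rmix_def assms(1) by (intro sum.cong refl) (auto simp: sum_distrib_right intro!: sum.cong)
  also have "\<dots> = (\<Sum>j\<in>?S. \<Sum>b\<in>PiE ?S (\<lambda>_. UNIV). rij j ai (b j) * (\<Prod>m\<in>?S. \<pi> m (b m)))"
    by (rule sum.swap)
  also have "\<dots> = pairwise_payoff ?S rij ai \<pi>"
    unfolding pairwise_payoff_def using assms(2) by (intro sum.cong refl sum_PiE_single_coordinate) auto
  finally show ?thesis .
qed

theorem lemma3:
  fixes N :: nat
    and r :: "nat \<Rightarrow> (nat \<Rightarrow> 'a::finite) \<Rightarrow> real"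
    and rbar :: "nat \<Rightarrow> 'a \<Rightarrow> ('a \<Rightarrow> nat) \<Rightarrow> real"
    and \<alpha> :: "nat \<Rightarrow> real"
    and act :: "nat \<Rightarrow> nat \<Rightarrow> 'a"
  assumes poly: "polymatrix N r"
    and anon: "anonymous N r"
    and rbar: "\<And>i a. i < N \<Longrightarrow> r i a = rbar i (a i) (sigma N i a)"
    and step: "\<And>k. k \<ge> 1 \<Longrightarrow> 0 < \<alpha> k \<and> \<alpha> k \<le> 1"
    and i: "i < N"
  shows "Rbar N rbar i ai (muhat N \<alpha> act i k) = Rmix N r i ai (\<lambda>j. pihat \<alpha> act j k)"
proof -
  let ?S = "{..<N} - {i}"
  obtain rij where rij: "\<And>a. r i a = (\<Sum>j\<in>?S. rij i j (a i) (a j))"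
    using poly i unfolding polymatrix_def by blast
  have pure: "Rbar N rbar i ai (basis (sigma N i a)) = pairwise_payoff ?S (rij i) ai (\<lambda>j. basis (a j))"
    for a
  proof -
    have "Rbar N rbar i ai (basis (sigma N i a)) = rbar i ai (sigma N i (a(i := ai)))"
      by (simp add: Rbar_basis sigma_in_Xset sigma_fun_upd_self i)
    also have "\<dots> = r i (a(i := ai))"
      using rbar[OF i] by simp
    also have "\<dots> = pairwise_payoff ?S (rij i) ai (\<lambda>j. basis (a j))"
      by (simp add: rij pairwise_payoff_basis)
    finally show ?thesis .
  qed
  have "Rbar N rbar i ai (muhat N \<alpha> act i k) = pairwise_payoff ?S (rij i) ai (\<lambda>j. pihat \<alpha> act j k)"
    by (induction k) (simp_all add: pure Rbar_affine pairwise_payoff_affine)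
  also have "\<dots> = Rmix N r i ai (\<lambda>j. pihat \<alpha> act j k)"
    by (rule Rmix_polymatrix[symmetric]) (simp_all add: rij sum_pihat)
  finally show ?thesis .
qed

end
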